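(* Let $\lambda,\mu,\nu\in\mathcal{P}_k^+$. (i) The coefficient $f^\nu_{\lambda\mu}$ equals the cardinality of $\{(w,w')\in S^\lambda\times S^\mu:\lambda\circ w+\mu\circ w'=\nu\}$. (ii) $\chi_{\lambda/\mu}$ equals the cardinality of $\{w\in S^\mu:\mu_{w(i)}\le\lambda_i\text{ for all }i\in[k]\}$.
   Context: $[k]=\{1,\dots,k\}$. $\mathcal{P}_k^+$ is the set of $\lambda\in\mathbb{Z}^k$ with $\lambda_1\ge\cdots\ge\lambda_k\ge0$, identified with partitions having at most $k$ nonzero parts. $f^\nu_{\lambda\mu}$ is defined by $m_\lambda m_\mu=\sum_\nu f^\nu_{\lambda\mu}m_\nu$ in the ring of symmetric functions ($m_\lambda$ the monomial symmetric functions). For $\lambda\in\mathbb{Z}^k$ and $w\in S_k$, $\lambda\circ w=(\lambda_{w(1)},\dots,\lambda_{w(k)})$; $S_\lambda\subset S_k$ is the stabiliser of $\lambda$, and $S^\lambda$ is the set of minimal length (with respect to the simple transpositions) representatives of the right cosets $S_\lambda\backslash S_k$. For partitions $\lambda,\mu$ with conjugates $\lambda',\mu'$, $\chi_{\lambda/\mu}=\prod_{i\ge1}\binom{\lambda'_i-\mu'_{i+1}}{\mu'_i-\mu'_{i+1}}$ if $\mu\subset\lambda$ and $0$ otherwise. *)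

theory Defs
  imports "HOL-Combinatorics.Permutations"
begin

text \<open>Elements of \<open>P_k^+\<close>: \<open>\<lambda> :: nat \<Rightarrow> nat\<close>, entries indexed by \<open>[k] = {1..k}\<close>,
  weakly decreasing, and zero outside \<open>[k]\<close> (identification with partitions).\<close>
definition Pk_plus :: "nat \<Rightarrow> (nat \<Rightarrow> nat) \<Rightarrow> bool" where
  "Pk_plus k lam \<longleftrightarrow> (\<forall>i. i \<notin> {1..k} \<longrightarrow> lam i = 0) \<and>
     (\<forall>i j. 1 \<le> i \<longrightarrow> i \<le> j \<longrightarrow> lam j \<le> lam i)"

text \<open>Formal power series in the variables \<open>x_0, x_1, ...\<close> with integer coefficients,
  indexed by exponent vectors \<open>nat \<Rightarrow> nat\<close> (only finitely supported ones matter).\<close>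
type_synonym fps_inf = "(nat \<Rightarrow> nat) \<Rightarrow> int"

definition series_mult :: "fps_inf \<Rightarrow> fps_inf \<Rightarrow> fps_inf" where
  "series_mult f g = (\<lambda>nu. \<Sum>a\<in>{a. \<forall>i. a i \<le> nu i}. f a * g (\<lambda>i. nu i - a i))"

text \<open>Monomial symmetric function \<open>m_\<lambda>\<close>: the sum of all distinct monomials whose
  exponent vector is a rearrangement of \<open>\<lambda>\<close>.\<close>
definition msym :: "(nat \<Rightarrow> nat) \<Rightarrow> fps_inf" where
  "msym lam = (\<lambda>a. if (\<exists>s. bij s \<and> a = lam \<circ> s) then 1 else 0)"

text \<open>\<open>f^\<nu>_{\<lambda>\<mu>}\<close>: the coefficient of \<open>m_\<nu>\<close> in \<open>m_\<lambda> m_\<mu>\<close>, i.e. the coefficient of the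
  monomial \<open>x^\<nu>\<close> in the product.\<close>
definition fcoeff :: "(nat \<Rightarrow> nat) \<Rightarrow> (nat \<Rightarrow> nat) \<Rightarrow> (nat \<Rightarrow> nat) \<Rightarrow> int" where
  "fcoeff lam mu nu = series_mult (msym lam) (msym mu) nu"

definition Sk :: "nat \<Rightarrow> (nat \<Rightarrow> nat) set" where
  "Sk k = {w. w permutes {1..k}}"

text \<open>Coxeter length w.r.t. simple transpositions = number of inversions.\<close>
definition perm_length :: "nat \<Rightarrow> (nat \<Rightarrow> nat) \<Rightarrow> nat" where
  "perm_length k w = card {(i, j). 1 \<le> i \<and> i < j \<and> j \<le> k \<and> w j < w i}"

definition stab :: "nat \<Rightarrow> (nat \<Rightarrow> nat) \<Rightarrow> (nat \<Rightarrow> nat) set" where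
  "stab k lam = {w \<in> Sk k. \<forall>i\<in>{1..k}. lam (w i) = lam i}"

definition minreps :: "nat \<Rightarrow> (nat \<Rightarrow> nat) \<Rightarrow> (nat \<Rightarrow> nat) set" where
  "minreps k lam = {w \<in> Sk k. \<forall>u\<in>stab k lam. perm_length k w \<le> perm_length k (u \<circ> w)}"

definition conj_part :: "(nat \<Rightarrow> nat) \<Rightarrow> nat \<Rightarrow> nat" where
  "conj_part lam i = card {j. 1 \<le> j \<and> i \<le> lam j}"

text \<open>\<open>\<chi>_{\<lambda>/\<mu>}\<close>; the infinite product is restricted to \<open>i \<le> \<lambda>_1\<close>, since all later
  factors equal \<open>binom 0 0 = 1\<close> when \<open>\<mu> \<subseteq> \<lambda>\<close>.\<close>
definition chi :: "(nat \<Rightarrow> nat) \<Rightarrow> (nat \<Rightarrow> nat) \<Rightarrow> nat" where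
  "chi lam mu = (if (\<forall>i. mu i \<le> lam i) then
     (\<Prod>i\<in>{1..lam 1}. (conj_part lam i - conj_part mu (Suc i)) choose
                        (conj_part mu i - conj_part mu (Suc i)))
   else 0)"

end

theory Submission
  imports Defs
begin

text \<open>Since \<open>\<nu>\<close> vanishes outside \<open>[k]\<close>, the coefficient of \<open>x^\<nu>\<close> in \<open>m_\<lambda> m_\<mu>\<close> counts the
  \<open>a \<le> \<nu>\<close> such that \<open>a\<close> is a rearrangement of \<open>\<lambda>\<close> and \<open>\<nu> - a\<close> one of \<open>\<mu>\<close>. The rearrangements of
  \<open>\<lambda>\<close> supported in \<open>[k]\<close> are the \<open>\<lambda> \<circ> w\<close>, and each coset \<open>S_\<lambda> w\<close> has exactly one element
  increasing on every level set of \<open>\<lambda> \<circ> w\<close>; its inversions are contained in those of every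
  other element of the coset, so it is the minimal representative. This gives (i), and reduces (ii)
  to counting the rearrangements \<open>b \<le> \<lambda>\<close> of \<open>\<mu>\<close>, which is done one row of the diagram at a time.\<close>

section \<open>Minimal coset representatives\<close>

lemma Sk_in: "w \<in> Sk k \<Longrightarrow> i \<in> {1..k} \<Longrightarrow> w i \<in> {1..k}"
  using permutes_in_image[of w "{1..k}" i] by (simp add: Sk_def)

lemma Sk_fixes: "w \<in> Sk k \<Longrightarrow> i \<notin> {1..k} \<Longrightarrow> w i = i"
  by (simp add: Sk_def permutes_not_in)

lemma Sk_inj: "w \<in> Sk k \<Longrightarrow> inj w"
  by (simp add: Sk_def permutes_inj)

lemma Sk_comp_eq_iff:
  assumes "v \<in> Sk k" "w \<in> Sk k"
  shows "x \<circ> v = x \<circ> w \<longleftrightarrow> (\<forall>i\<in>{1..k}. x (v i) = x (w i))"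
proof
  show "x \<circ> v = x \<circ> w" if "\<forall>i\<in>{1..k}. x (v i) = x (w i)"
  proof
    fix i
    show "(x \<circ> v) i = (x \<circ> w) i"
      using that Sk_fixes[OF assms(1), of i] Sk_fixes[OF assms(2), of i] by (cases "i \<in> {1..k}") auto
  qed
qed (simp add: fun_eq_iff)

definition inversions :: "nat \<Rightarrow> (nat \<Rightarrow> nat) \<Rightarrow> (nat \<times> nat) set" where
  "inversions k w = {(i, j). 1 \<le> i \<and> i < j \<and> j \<le> k \<and> w j < w i}"

lemma finite_inversions: "finite (inversions k w)"
  by (rule finite_subset[of _ "{1..k} \<times> {1..k}"]) (auto simp: inversions_def)

lemma perm_length_eq_card_inversions: "perm_length k w = card (inversions k w)"
  by (simp add: perm_length_def inversions_def)

lemma Sk_eq_card_le: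
  assumes w: "w \<in> Sk k" and i: "i \<in> {1..k}"
  shows "w i = card {j\<in>{1..k}. w j \<le> w i}"
proof -
  have "{j\<in>{1..k}. w j \<le> w i} = w -` {1..w i}"
  proof (intro set_eqI iffI)
    fix j assume "j \<in> w -` {1..w i}"
    then have "j \<in> {1..k}"
      using Sk_fixes[OF w, of j] Sk_in[OF w i] by (cases "j \<in> {1..k}") auto
    then show "j \<in> {j\<in>{1..k}. w j \<le> w i}"
      using \<open>j \<in> w -` {1..w i}\<close> by simp
  next
    fix j assume "j \<in> {j\<in>{1..k}. w j \<le> w i}"
    then show "j \<in> w -` {1..w i}"
      using Sk_in[OF w, of j] by simp
  qed
  moreover have "card (w -` {1..w i}) = card {1..w i}"
    using w by (intro card_vimage_inj) (auto simp: Sk_def permutes_inj permutes_surj)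
  ultimately show ?thesis
    by simp
qed

text \<open>A permutation is determined by its inversion set: \<open>w i\<close> counts the \<open>j\<close> with
  \<open>w j \<le> w i\<close>, and whether \<open>w j \<le> w i\<close> is read off the inversions.\<close>
lemma Sk_eqI_inversions:
  assumes v: "v \<in> Sk k" and w: "w \<in> Sk k" and eq: "inversions k v = inversions k w"
  shows "v = w"
proof
  have le_iff: "u j \<le> u i \<longleftrightarrow> (j \<le> i \<and> (j, i) \<notin> inversions k u) \<or> (i < j \<and> (i, j) \<in> inversions k u)"
    if "u \<in> Sk k" "i \<in> {1..k}" "j \<in> {1..k}" for u i j
    using that injD[OF Sk_inj[OF that(1)], of i j]
    by (cases rule: linorder_cases[of j i]) (auto simp: inversions_def le_less)
  fix i
  show "v i = w i"
  proof (cases "i \<in> {1..k}")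
    case True
    have "v i = card {j\<in>{1..k}. v j \<le> v i}"
      using v True by (rule Sk_eq_card_le)
    also have "{j\<in>{1..k}. v j \<le> v i} = {j\<in>{1..k}. w j \<le> w i}"
      using le_iff[OF v True] le_iff[OF w True] eq by auto
    also have "card \<dots> = w i"
      using w True by (rule Sk_eq_card_le[symmetric])
    finally show ?thesis .
  next
    case False
    then show ?thesis
      using Sk_fixes[OF v False] Sk_fixes[OF w False] by simp
  qed
qed

definition increasing_on_level_sets :: "nat \<Rightarrow> (nat \<Rightarrow> nat) \<Rightarrow> (nat \<Rightarrow> nat) \<Rightarrow> bool" where
  "increasing_on_level_sets k x v \<longleftrightarrow>
     (\<forall>i\<in>{1..k}. \<forall>j\<in>{1..k}. i < j \<longrightarrow> x (v i) = x (v j) \<longrightarrow> v i < v j)"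

lemma inversions_subset_if_increasing_on_level_sets:
  assumes x: "antimono_on {1..k} x" and v: "v \<in> Sk k" and inc: "increasing_on_level_sets k x v"
    and y: "y \<in> Sk k" and same: "\<forall>i\<in>{1..k}. x (y i) = x (v i)"
  shows "inversions k v \<subseteq> inversions k y"
proof
  fix p assume "p \<in> inversions k v"
  then obtain i j where p: "p = (i, j)" and ij: "1 \<le> i" "i < j" "j \<le> k" "v j < v i"
    by (auto simp: inversions_def)
  have i: "i \<in> {1..k}" and j: "j \<in> {1..k}"
    using ij by auto
  have "x (v i) \<le> x (v j)"
    using monotone_onD[OF x Sk_in[OF v j] Sk_in[OF v i]] ij(4) by simp
  moreover have "x (v i) \<noteq> x (v j)"
    using inc i j ij by (force simp: increasing_on_level_sets_def)
  ultimately have "x (y i) < x (y j)"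
    using same i j by simp
  then have "y j < y i"
    using monotone_onD[OF x Sk_in[OF y i] Sk_in[OF y j]] by (meson not_le order.strict_implies_order)
  then show "p \<in> inversions k y"
    using p ij by (simp add: inversions_def)
qed

lemma sum_index_mult_less_transpose:
  fixes u :: "nat \<Rightarrow> nat"
  assumes A: "finite A" "i \<in> A" "j \<in> A" and ij: "i < j" "u j < u i"
  shows "(\<Sum>l\<in>A. l * u l) < (\<Sum>l\<in>A. l * (u \<circ> Transposition.transpose i j) l)"
proof -
  have split: "(\<Sum>l\<in>A. l * f l) = i * f i + j * f j + (\<Sum>l\<in>A - {i} - {j}. l * f l)"
    for f :: "nat \<Rightarrow> nat"
    using A ij by (simp add: sum.remove[of A i] sum.remove[of "A - {i}" j])
  have rest: "(\<Sum>l\<in>A - {i} - {j}. l * (u \<circ> Transposition.transpose i j) l) =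
      (\<Sum>l\<in>A - {i} - {j}. l * u l)"
    by (rule sum.cong) auto
  obtain d where "j = i + Suc d"
    using ij(1) less_iff_Suc_add by auto
  moreover obtain e where "u i = u j + Suc e"
    using ij(2) less_iff_Suc_add by auto
  ultimately have "i * u i + j * u j < i * u j + j * u i"
    by (simp add: algebra_simps)
  then show ?thesis
    using split[of u] split[of "u \<circ> Transposition.transpose i j"] rest by simp
qed

text \<open>Take the element of the coset \<open>S_x w\<close> maximising \<open>\<Sum>l. l * v l\<close>.\<close>
lemma exists_increasing_on_level_sets:
  assumes w: "w \<in> Sk k"
  shows "\<exists>v\<in>Sk k. increasing_on_level_sets k x v \<and> (\<forall>i\<in>{1..k}. x (v i) = x (w i))"
proof -
  define F where "F = {v\<in>Sk k. \<forall>i\<in>{1..k}. x (v i) = x (w i)}"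
  define \<Phi> where "\<Phi> v = (\<Sum>l\<in>{1..k}. l * v l)" for v :: "nat \<Rightarrow> nat"
  have finF: "finite F"
    unfolding F_def Sk_def by (rule finite_subset[OF _ finite_permutations[of "{1..k}"]]) auto
  have "Max (\<Phi> ` F) \<in> \<Phi> ` F"
    using finF w by (intro Max_in) (auto simp: F_def)
  then obtain v where vmax_eq: "Max (\<Phi> ` F) = \<Phi> v" and vF: "v \<in> F"
    by (rule imageE)
  have vmax: "\<Phi> u \<le> \<Phi> v" if "u \<in> F" for u
    using finF that unfolding vmax_eq[symmetric] by (intro Max_ge) auto
  have "increasing_on_level_sets k x v"
    unfolding increasing_on_level_sets_def
  proof (intro ballI impI)
    fix i j assume i: "i \<in> {1..k}" and j: "j \<in> {1..k}" and ij: "i < j" and level: "x (v i) = x (v j)"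
    show "v i < v j"
    proof (rule ccontr)
      assume "\<not> v i < v j"
      moreover have "v i \<noteq> v j"
        using injD[OF Sk_inj, of v k i j] vF ij by (auto simp: F_def)
      ultimately have "v j < v i"
        by simp
      define v' where "v' = v \<circ> Transposition.transpose i j"
      have "v' \<in> F"
        using vF i j level
        by (auto simp: F_def Sk_def v'_def Transposition.transpose_def intro!: permutes_compose permutes_swap_id)
      moreover have "\<Phi> v < \<Phi> v'"
        unfolding \<Phi>_def v'_def using i j ij \<open>v j < v i\<close> by (intro sum_index_mult_less_transpose) auto
      ultimately show False
        using vmax by (simp add: not_le[symmetric])
    qed
  qed
  then show ?thesis
    using vF by (auto simp: F_def)
qed

lemma minreps_eq_increasing_on_level_sets:
  assumes x: "antimono_on {1..k} x"
  shows "minreps k x = {v\<in>Sk k. increasing_on_level_sets k x v}"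
proof (intro set_eqI iffI)
  fix v assume "v \<in> {v\<in>Sk k. increasing_on_level_sets k x v}"
  then have v: "v \<in> Sk k" and inc: "increasing_on_level_sets k x v"
    by auto
  have "perm_length k v \<le> perm_length k (u \<circ> v)" if u: "u \<in> stab k x" for u
  proof -
    have uv: "u \<circ> v \<in> Sk k"
      using u v by (auto simp: stab_def Sk_def intro: permutes_compose)
    have "\<forall>i\<in>{1..k}. x ((u \<circ> v) i) = x (v i)"
      using u Sk_in[OF v] by (simp add: stab_def)
    then have "inversions k v \<subseteq> inversions k (u \<circ> v)"
      by (rule inversions_subset_if_increasing_on_level_sets[OF x v inc uv])
    then show ?thesis
      unfolding perm_length_eq_card_inversions by (intro card_mono finite_inversions)
  qed
  then show "v \<in> minreps k x"
    using v by (simp add: minreps_def)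
next
  fix v assume min: "v \<in> minreps k x"
  then have v: "v \<in> Sk k" and vp: "v permutes {1..k}"
    by (auto simp: minreps_def Sk_def)
  obtain v0 where v0: "v0 \<in> Sk k" and inc: "increasing_on_level_sets k x v0"
    and same: "\<forall>i\<in>{1..k}. x (v0 i) = x (v i)"
    using exists_increasing_on_level_sets[OF v] by blast
  define u where "u = v0 \<circ> inv v"
  have "u \<in> stab k x"
    using v0 vp same permutes_in_image[OF permutes_inv[OF vp]]
    by (auto simp: u_def stab_def Sk_def permutes_inverses(1)[OF vp] intro!: permutes_compose permutes_inv)
  moreover have "u \<circ> v = v0"
    using permutes_inv_o(2)[OF vp] by (simp add: u_def comp_assoc)
  ultimately have "card (inversions k v) \<le> card (inversions k v0)"
    using min by (force simp: minreps_def perm_length_eq_card_inversions)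
  moreover have "inversions k v0 \<subseteq> inversions k v"
    using same by (intro inversions_subset_if_increasing_on_level_sets[OF x v0 inc v]) simp
  ultimately have "inversions k v0 = inversions k v"
    using card_mono[OF finite_inversions] by (intro card_subset_eq finite_inversions) (auto intro: le_antisym)
  then have "v0 = v"
    by (rule Sk_eqI_inversions[OF v0 v])
  then show "v \<in> {v\<in>Sk k. increasing_on_level_sets k x v}"
    using v0 inc by simp
qed

lemma inj_on_comp_minreps:
  assumes x: "antimono_on {1..k} x"
  shows "inj_on (\<lambda>w. x \<circ> w) (minreps k x)"
proof (rule inj_onI)
  fix v w assume "v \<in> minreps k x" "w \<in> minreps k x" and eq: "x \<circ> v = x \<circ> w"
  then have v: "v \<in> Sk k" "increasing_on_level_sets k x v" and w: "w \<in> Sk k" "increasing_on_level_sets k x w"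
    by (auto simp: minreps_eq_increasing_on_level_sets[OF x])
  have same: "\<forall>i\<in>{1..k}. x (v i) = x (w i)"
    using eq by (simp add: Sk_comp_eq_iff[OF v(1) w(1)])
  have "inversions k v = inversions k w"
    using inversions_subset_if_increasing_on_level_sets[OF x v(1,2) w(1)]
      inversions_subset_if_increasing_on_level_sets[OF x w(1,2) v(1)] same by auto
  then show "v = w"
    by (rule Sk_eqI_inversions[OF v(1) w(1)])
qed

lemma comp_image_minreps:
  assumes x: "antimono_on {1..k} x"
  shows "(\<lambda>w. x \<circ> w) ` minreps k x = (\<lambda>w. x \<circ> w) ` Sk k"
proof
  show "(\<lambda>w. x \<circ> w) ` Sk k \<subseteq> (\<lambda>w. x \<circ> w) ` minreps k x"
  proof clarify
    fix w assume w: "w \<in> Sk k"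
    then obtain v where v: "v \<in> Sk k" "increasing_on_level_sets k x v" and "\<forall>i\<in>{1..k}. x (v i) = x (w i)"
      using exists_increasing_on_level_sets by blast
    then have "x \<circ> w = x \<circ> v"
      by (simp add: Sk_comp_eq_iff[OF w v(1)])
    then show "x \<circ> w \<in> (\<lambda>w. x \<circ> w) ` minreps k x"
      using v by (simp add: minreps_eq_increasing_on_level_sets[OF x])
  qed
qed (auto simp: minreps_def)

section \<open>Rearrangements and monomial symmetric functions\<close>

definition zero_outside :: "nat \<Rightarrow> (nat \<Rightarrow> nat) \<Rightarrow> bool" where
  "zero_outside k b \<longleftrightarrow> (\<forall>j. j \<notin> {1..k} \<longrightarrow> b j = 0)"

text \<open>For \<open>x\<close> vanishing outside \<open>[k]\<close> these are the \<open>x \<circ> w\<close> with \<open>w \<in> S_k\<close>. Describing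
  them through the conjugate partition makes both the invariance under arbitrary bijections of
  \<open>\<nat>\<close> and the removal of the bottom row in the count of \<open>\<chi>\<close> immediate.\<close>
definition rearrangements :: "nat \<Rightarrow> (nat \<Rightarrow> nat) \<Rightarrow> (nat \<Rightarrow> nat) set" where
  "rearrangements k x = {b. zero_outside k b \<and> (\<forall>i\<ge>1. conj_part b i = conj_part x i)}"

lemma zero_outside_0: "zero_outside k b \<Longrightarrow> b 0 = 0"
  by (simp add: zero_outside_def)

lemma Pk_plus_zero_outside: "Pk_plus k x \<Longrightarrow> zero_outside k x"
  by (simp add: Pk_plus_def zero_outside_def)

lemma Pk_plus_antimono_on: "Pk_plus k x \<Longrightarrow> antimono_on {1..k} x"
  unfolding Pk_plus_def by (intro monotone_onI) auto

lemma conj_part_set_subset: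
  assumes "zero_outside k b" and "1 \<le> i"
  shows "{j. 1 \<le> j \<and> i \<le> b j} \<subseteq> {1..k}"
  using assms by (auto simp: zero_outside_def)

lemma finite_conj_part_set: "zero_outside k b \<Longrightarrow> 1 \<le> i \<Longrightarrow> finite {j. 1 \<le> j \<and> i \<le> b j}"
  by (rule finite_subset[OF conj_part_set_subset]) simp_all

lemma conj_part_eq_card_atLeastAtMost:
  assumes "zero_outside k b" and "1 \<le> i"
  shows "conj_part b i = card {j\<in>{1..k}. i \<le> b j}"
proof -
  have "{j. 1 \<le> j \<and> i \<le> b j} = {j\<in>{1..k}. i \<le> b j}"
    using conj_part_set_subset[OF assms] by auto
  then show ?thesis
    by (simp add: conj_part_def)
qed

lemma conj_part_comp_bij:
  assumes s: "bij s" and x0: "x 0 = 0" and xs0: "x (s 0) = 0" and i: "1 \<le> i"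
  shows "conj_part (x \<circ> s) i = conj_part x i"
proof -
  have nonzero: "1 \<le> j \<and> 1 \<le> s j" if "i \<le> x (s j)" for j
    using that x0 xs0 i by (cases "j = 0"; cases "s j = 0") auto
  have "{j. 1 \<le> j \<and> i \<le> (x \<circ> s) j} = s -` {p. 1 \<le> p \<and> i \<le> x p}"
    using nonzero by auto
  moreover have "card (s -` {p. 1 \<le> p \<and> i \<le> x p}) = card {p. 1 \<le> p \<and> i \<le> x p}"
    using s by (intro card_vimage_inj) (auto simp: bij_def)
  ultimately show ?thesis
    by (simp add: conj_part_def)
qed

lemma count_image_mset_mset_set:
  assumes "finite A"
  shows "count (image_mset f (mset_set A)) c = card {a\<in>A. f a = c}"
proof -
  have "count (image_mset f (mset_set A)) c = (\<Sum>a | a \<in> A \<and> c = f a. 1)"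
    using assms by (simp add: count_image_mset')
  also have "\<dots> = card {a\<in>A. f a = c}"
    by (simp add: eq_commute)
  finally show ?thesis .
qed

lemma card_fibre_eq_if_card_superlevel_eq:
  fixes b x :: "nat \<Rightarrow> nat"
  assumes above: "\<And>i. 1 \<le> i \<Longrightarrow> card {j\<in>{1..k}. i \<le> b j} = card {j\<in>{1..k}. i \<le> x j}"
  shows "card {j\<in>{1..k}. b j = c} = card {j\<in>{1..k}. x j = c}"
proof -
  have level: "card {j\<in>{1..k}. y j = c} =
      (if c = 0 then k - card {j\<in>{1..k}. 1 \<le> y j}
       else card {j\<in>{1..k}. c \<le> y j} - card {j\<in>{1..k}. Suc c \<le> y j})"
    for y :: "nat \<Rightarrow> nat"
  proof (cases "c = 0")
    case True
    have "{j\<in>{1..k}. y j = c} = {1..k} - {j\<in>{1..k}. 1 \<le> y j}"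
      using True by auto
    moreover have "card ({1..k} - {j\<in>{1..k}. 1 \<le> y j}) = k - card {j\<in>{1..k}. 1 \<le> y j}"
      by (subst card_Diff_subset) auto
    ultimately show ?thesis
      using True by simp
  next
    case False
    have "{j\<in>{1..k}. y j = c} = {j\<in>{1..k}. c \<le> y j} - {j\<in>{1..k}. Suc c \<le> y j}"
      by auto
    then show ?thesis
      using False by (simp add: card_Diff_subset Collect_mono_iff)
  qed
  show ?thesis
    unfolding level[of b] level[of x] using above[of 1] above[of c] above[of "Suc c"] by simp
qed

lemma rearrangements_eq_comp_image_Sk:
  assumes x: "zero_outside k x"
  shows "rearrangements k x = (\<lambda>w. x \<circ> w) ` Sk k"
proof (intro set_eqI iffI)
  fix b assume "b \<in> rearrangements k x"
  then have b: "zero_outside k b" and eq: "\<forall>i\<ge>1. conj_part b i = conj_part x i"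
    unfolding rearrangements_def by blast+
  have "card {j\<in>{1..k}. i \<le> b j} = card {j\<in>{1..k}. i \<le> x j}" if "1 \<le> i" for i
    using eq that by (simp add: conj_part_eq_card_atLeastAtMost[OF b] conj_part_eq_card_atLeastAtMost[OF x])
  then have "card {j\<in>{1..k}. b j = c} = card {j\<in>{1..k}. x j = c}" for c
    by (rule card_fibre_eq_if_card_superlevel_eq)
  then have "image_mset b (mset_set {1..k}) = image_mset x (mset_set {1..k})"
    by (intro multiset_eqI) (simp add: count_image_mset_mset_set)
  then obtain w where w: "w permutes {1..k}" and bw: "\<forall>j\<in>{1..k}. b j = x (w j)"
    by (rule image_mset_eq_implies_permutes[OF finite_atLeastAtMost])
  have "b = x \<circ> w"
  proof
    fix j
    show "b j = (x \<circ> w) j"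
      using bw b x permutes_not_in[OF w, of j] by (cases "j \<in> {1..k}") (auto simp: zero_outside_def)
  qed
  then show "b \<in> (\<lambda>w. x \<circ> w) ` Sk k"
    using w by (auto simp: Sk_def)
next
  fix b assume "b \<in> (\<lambda>w. x \<circ> w) ` Sk k"
  then obtain w where w: "w \<in> Sk k" and b: "b = x \<circ> w"
    by blast
  have "zero_outside k b"
    using x Sk_fixes[OF w] by (auto simp: zero_outside_def b)
  moreover have "conj_part b i = conj_part x i" if "1 \<le> i" for i
    unfolding b using w zero_outside_0[OF x] Sk_fixes[OF w, of 0] that
    by (intro conj_part_comp_bij) (auto simp: Sk_def permutes_bij)
  ultimately show "b \<in> rearrangements k x"
    by (simp add: rearrangements_def)
qed

lemma msym_eq_indicator_rearrangements:
  assumes x: "zero_outside k x" and a: "zero_outside k a"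
  shows "msym x a = (if a \<in> rearrangements k x then 1 else 0)"
proof -
  have "(\<exists>s. bij s \<and> a = x \<circ> s) \<longleftrightarrow> a \<in> rearrangements k x"
  proof
    assume "\<exists>s. bij s \<and> a = x \<circ> s"
    then obtain s where "bij s" "a = x \<circ> s"
      by blast
    then show "a \<in> rearrangements k x"
      using a zero_outside_0[OF x] zero_outside_0[OF a]
      by (auto simp: rearrangements_def intro: conj_part_comp_bij)
  next
    assume "a \<in> rearrangements k x"
    then obtain w where "w permutes {1..k}" "a = x \<circ> w"
      by (auto simp: rearrangements_eq_comp_image_Sk[OF x] Sk_def)
    then show "\<exists>s. bij s \<and> a = x \<circ> s"
      using permutes_bij by blast
  qed
  then show ?thesis
    by (simp add: msym_def)
qed

lemma bij_betw_minreps_rearrangements: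
  assumes "Pk_plus k x"
  shows "bij_betw (\<lambda>w. x \<circ> w) (minreps k x) (rearrangements k x)"
  unfolding bij_betw_def
  using inj_on_comp_minreps[OF Pk_plus_antimono_on] comp_image_minreps[OF Pk_plus_antimono_on]
    rearrangements_eq_comp_image_Sk[OF Pk_plus_zero_outside] assms
  by simp

lemma card_Collect_bij_betw:
  assumes "bij_betw f A B"
  shows "card {a\<in>A. P (f a)} = card {b\<in>B. P b}"
proof (rule bij_betw_same_card)
  show "bij_betw f {a\<in>A. P (f a)} {b\<in>B. P b}"
    using assms by (auto simp: bij_betw_def inj_on_def)
qed

lemma zero_outside_le: "zero_outside k nu \<Longrightarrow> \<forall>i. a i \<le> nu i \<Longrightarrow> zero_outside k a"
  unfolding zero_outside_def by (metis le_zero_eq)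

lemma finite_pointwise_le:
  assumes nu: "zero_outside k nu"
  shows "finite {a :: nat \<Rightarrow> nat. \<forall>i. a i \<le> nu i}"
proof -
  let ?A = "{a :: nat \<Rightarrow> nat. \<forall>i. a i \<le> nu i}"
  have "inj_on (\<lambda>a. restrict a {1..k}) ?A"
  proof (rule inj_onI)
    fix a b assume a: "a \<in> ?A" and b: "b \<in> ?A" and eq: "restrict a {1..k} = restrict b {1..k}"
    show "a = b"
    proof
      fix j
      show "a j = b j"
        using fun_cong[OF eq, of j] zero_outside_le[OF nu, of a] zero_outside_le[OF nu, of b] a b
        by (cases "j \<in> {1..k}") (auto simp: zero_outside_def)
    qed
  qed
  moreover have "(\<lambda>a. restrict a {1..k}) ` ?A \<subseteq> PiE {1..k} (\<lambda>j. {0..nu j})"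
    by auto
  ultimately show ?thesis
    by (meson finite_PiE finite_atLeastAtMost finite_imageD finite_subset)
qed

lemma fcoeff_eq_card_rearrangements:
  assumes lam: "zero_outside k lam" and mu: "zero_outside k mu" and nu: "zero_outside k nu"
  shows "fcoeff lam mu nu =
    int (card {a. (\<forall>i. a i \<le> nu i) \<and> a \<in> rearrangements k lam \<and> (\<lambda>i. nu i - a i) \<in> rearrangements k mu})"
proof -
  define A where "A = {a :: nat \<Rightarrow> nat. \<forall>i. a i \<le> nu i}"
  have "msym lam a * msym mu (\<lambda>i. nu i - a i) =
      (if a \<in> rearrangements k lam \<and> (\<lambda>i. nu i - a i) \<in> rearrangements k mu then 1 else 0)"
    if "a \<in> A" for a
  proof -
    have "zero_outside k a"
      using that zero_outside_le[OF nu] by (simp add: A_def)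
    moreover have "zero_outside k (\<lambda>i. nu i - a i)"
      using nu by (simp add: zero_outside_def)
    ultimately show ?thesis
      by (simp add: msym_eq_indicator_rearrangements[OF lam] msym_eq_indicator_rearrangements[OF mu])
  qed
  then have "fcoeff lam mu nu =
      (\<Sum>a\<in>A. if a \<in> rearrangements k lam \<and> (\<lambda>i. nu i - a i) \<in> rearrangements k mu then 1 else 0)"
    by (simp add: fcoeff_def series_mult_def A_def)
  also have "\<dots> = int (card {a\<in>A. a \<in> rearrangements k lam \<and> (\<lambda>i. nu i - a i) \<in> rearrangements k mu})"
    using finite_pointwise_le[OF nu] by (simp add: A_def sum.If_cases Int_def)
  finally show ?thesis
    by (simp add: A_def)
qed

lemma fcoeff_eq_card_minreps:
  assumes lam: "Pk_plus k lam" and mu: "Pk_plus k mu" and nu: "zero_outside k nu"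
  shows "fcoeff lam mu nu =
           int (card {(w, w'). w \<in> minreps k lam \<and> w' \<in> minreps k mu \<and>
                      (\<forall>i\<in>{1..k}. lam (w i) + mu (w' i) = nu i)})"
proof -
  let ?R = "\<lambda>x. rearrangements k x"
  define sums_to_nu where "sums_to_nu = (\<lambda>(a, b). \<forall>i\<in>{1..k}. a i + b i = nu i)"
  have "card {(w, w'). w \<in> minreps k lam \<and> w' \<in> minreps k mu \<and> (\<forall>i\<in>{1..k}. lam (w i) + mu (w' i) = nu i)}
      = card {p \<in> minreps k lam \<times> minreps k mu. sums_to_nu (map_prod (\<lambda>w. lam \<circ> w) (\<lambda>w. mu \<circ> w) p)}"
    by (rule arg_cong[where f = card]) (auto simp: sums_to_nu_def)
  also have "\<dots> = card {p \<in> ?R lam \<times> ?R mu. sums_to_nu p}"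
    by (intro card_Collect_bij_betw bij_betw_map_prod bij_betw_minreps_rearrangements lam mu)
  also have "\<dots> = card {a. (\<forall>i. a i \<le> nu i) \<and> a \<in> ?R lam \<and> (\<lambda>i. nu i - a i) \<in> ?R mu}"
  proof (rule bij_betw_same_card[OF bij_betw_byWitness[where f = fst and f' = "\<lambda>a. (a, \<lambda>i. nu i - a i)"]])
    have "b = (\<lambda>i. nu i - a i) \<and> (\<forall>i. a i \<le> nu i)" if "(a, b) \<in> ?R lam \<times> ?R mu" "sums_to_nu (a, b)" for a b
    proof -
      have "a i + b i = nu i" for i
        using that nu by (cases "i \<in> {1..k}") (auto simp: sums_to_nu_def rearrangements_def zero_outside_def)
      then show ?thesis
        by (metis add_diff_cancel_left' le_add1)
    qed
    then show "\<forall>p\<in>{p \<in> ?R lam \<times> ?R mu. sums_to_nu p}. (fst p, \<lambda>i. nu i - fst p i) = p"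
      and "fst ` {p \<in> ?R lam \<times> ?R mu. sums_to_nu p} \<subseteq> {a. (\<forall>i. a i \<le> nu i) \<and> a \<in> ?R lam \<and> (\<lambda>i. nu i - a i) \<in> ?R mu}"
      by auto
  qed (auto simp: sums_to_nu_def)
  finally show ?thesis
    using fcoeff_eq_card_rearrangements[OF Pk_plus_zero_outside[OF lam] Pk_plus_zero_outside[OF mu] nu]
    by simp
qed

section \<open>Counting rearrangements below a partition\<close>

lemma conj_part_diff_one: "1 \<le> i \<Longrightarrow> conj_part (\<lambda>j. x j - 1) i = conj_part x (Suc i)"
  unfolding conj_part_def by (rule arg_cong[where f = card]) auto

lemma conj_part_one: "zero_outside k b \<Longrightarrow> conj_part b 1 = card {j. b j \<noteq> 0}"
  unfolding conj_part_def zero_outside_def by (rule arg_cong[where f = card]) (auto simp: Suc_le_eq)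

lemma conj_part_mono:
  assumes c: "zero_outside k c" and i: "1 \<le> i" and le: "\<forall>j. b j \<le> c j"
  shows "conj_part b i \<le> conj_part c i"
  unfolding conj_part_def using le finite_conj_part_set[OF c i]
  by (intro card_mono) (auto intro: order_trans)

lemma conj_part_Suc_le: "zero_outside k x \<Longrightarrow> 1 \<le> i \<Longrightarrow> conj_part x (Suc i) \<le> conj_part x i"
  unfolding conj_part_def by (intro card_mono finite_conj_part_set) auto

lemma rearrangements_diff_one:
  assumes "b \<in> rearrangements k mu"
  shows "(\<lambda>j. b j - 1) \<in> rearrangements k (\<lambda>j. mu j - 1)"
proof -
  have "conj_part (\<lambda>j. b j - 1) i = conj_part (\<lambda>j. mu j - 1) i" if "1 \<le> i" for i
    using assms conj_part_diff_one[OF that, of b] conj_part_diff_one[OF that, of mu]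
    by (simp add: rearrangements_def)
  then show ?thesis
    using assms by (simp add: rearrangements_def zero_outside_def)
qed

lemma rearrangements_add_bottom_row:
  assumes b': "b' \<in> rearrangements k (\<lambda>j. mu j - 1)" and T: "{j. b' j \<noteq> 0} \<subseteq> T" "T \<subseteq> {1..k}"
    and card_T: "card T = conj_part mu 1"
  shows "(\<lambda>j. if j \<in> T then Suc (b' j) else 0) \<in> rearrangements k mu"
proof -
  define b where "b = (\<lambda>j. if j \<in> T then Suc (b' j) else 0)"
  have "conj_part b i = conj_part mu i" if i: "1 \<le> i" for i
  proof (cases "i = 1")
    case True
    have "{j. 1 \<le> j \<and> i \<le> b j} = T"
      using T True by (auto simp: b_def)
    then show ?thesis
      using True card_T by (simp add: conj_part_def)
  next
    case False
    then have "{j. 1 \<le> j \<and> i \<le> b j} = {j. 1 \<le> j \<and> i - 1 \<le> b' j}"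
      using i T(1) by (auto simp: b_def)
    then have "conj_part b i = conj_part b' (i - 1)"
      by (simp add: conj_part_def)
    also have "\<dots> = conj_part mu i"
      using b' False i conj_part_diff_one[of "i - 1" mu] by (simp add: rearrangements_def)
    finally show ?thesis .
  qed
  moreover have "zero_outside k b"
    using T(2) by (auto simp: zero_outside_def b_def)
  ultimately show ?thesis
    by (simp add: rearrangements_def b_def)
qed

lemma card_supersets:
  assumes L: "finite L" and A: "A \<subseteq> L" and m: "card A \<le> m"
  shows "card {T. A \<subseteq> T \<and> T \<subseteq> L \<and> card T = m} = (card L - card A) choose (m - card A)"
proof -
  have finA: "finite A"
    using L A by (rule finite_subset[rotated])
  have "bij_betw (\<lambda>T. T - A) {T. A \<subseteq> T \<and> T \<subseteq> L \<and> card T = m} {B. B \<subseteq> L - A \<and> card B = m - card A}"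
  proof (rule bij_betw_byWitness[where f' = "\<lambda>B. B \<union> A"])
    show "(\<lambda>B. B \<union> A) ` {B. B \<subseteq> L - A \<and> card B = m - card A} \<subseteq> {T. A \<subseteq> T \<and> T \<subseteq> L \<and> card T = m}"
    proof clarify
      fix B assume B: "B \<subseteq> L - A" "card B = m - card A"
      then have "card (B \<union> A) = card B + card A"
        using L finA by (intro card_Un_disjoint) (auto intro: finite_subset)
      then show "A \<subseteq> B \<union> A \<and> B \<union> A \<subseteq> L \<and> card (B \<union> A) = m"
        using B A m by auto
    qed
  qed (use finA in \<open>auto simp: card_Diff_subset\<close>)
  then have "card {T. A \<subseteq> T \<and> T \<subseteq> L \<and> card T = m} = card {B. B \<subseteq> L - A \<and> card B = m - card A}"
    by (rule bij_betw_same_card)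
  also have "\<dots> = card (L - A) choose (m - card A)"
    using L by (intro n_subsets) auto
  finally show ?thesis
    using A finA by (simp add: card_Diff_subset)
qed

text \<open>Removing the bottom row: the support of \<open>b\<close> may be any \<open>\<mu>'_1\<close>-subset of \<open>supp \<lambda>\<close>
  containing \<open>supp (b - 1)\<close>.\<close>
lemma bij_betw_remove_bottom_row:
  assumes lam: "zero_outside k lam"
  shows "bij_betw (\<lambda>b. ((\<lambda>j. b j - 1), {j. b j \<noteq> 0}))
    {b \<in> rearrangements k mu. \<forall>j. b j \<le> lam j}
    (SIGMA b':{b' \<in> rearrangements k (\<lambda>j. mu j - 1). \<forall>j. b' j \<le> lam j - 1}.
      {T. {j. b' j \<noteq> 0} \<subseteq> T \<and> T \<subseteq> {j. lam j \<noteq> 0} \<and> card T = conj_part mu 1})"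
    (is "bij_betw ?f ?B (Sigma ?B' ?rows)")
proof (rule bij_betw_byWitness[where f' = "\<lambda>(b', T) j. if j \<in> T then Suc (b' j) else 0"])
  show "\<forall>b\<in>?B. (\<lambda>(b', T) j. if j \<in> T then Suc (b' j) else 0) (?f b) = b"
    by auto
  show "\<forall>p\<in>Sigma ?B' ?rows. ?f ((\<lambda>(b', T) j. if j \<in> T then Suc (b' j) else 0) p) = p"
    by (auto simp: fun_eq_iff)
  show "?f ` ?B \<subseteq> Sigma ?B' ?rows"
  proof (rule image_subsetI)
    fix b assume b: "b \<in> ?B"
    then have "card {j. b j \<noteq> 0} = conj_part mu 1"
      using conj_part_one[of k b] by (simp add: rearrangements_def)
    moreover have "(\<lambda>j. b j - 1) \<in> rearrangements k (\<lambda>j. mu j - 1)"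
      using b by (intro rearrangements_diff_one) simp
    moreover have "{j. b j \<noteq> 0} \<subseteq> {j. lam j \<noteq> 0}"
      using b by auto (metis less_le_trans)
    ultimately show "?f b \<in> Sigma ?B' ?rows"
      using b by (auto simp: diff_le_mono)
  qed
  show "(\<lambda>(b', T) j. if j \<in> T then Suc (b' j) else 0) ` Sigma ?B' ?rows \<subseteq> ?B"
  proof (rule image_subsetI)
    fix p assume "p \<in> Sigma ?B' ?rows"
    then obtain b' T where p: "p = (b', T)" and b': "b' \<in> ?B'" and T: "T \<in> ?rows b'"
      by blast
    have "{j. lam j \<noteq> 0} \<subseteq> {1..k}"
      using lam by (auto simp: zero_outside_def)
    then have "T \<subseteq> {1..k}"
      using T by auto
    then have "(\<lambda>j. if j \<in> T then Suc (b' j) else 0) \<in> rearrangements k mu"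
      using b' T by (intro rearrangements_add_bottom_row) auto
    moreover have "Suc (b' j) \<le> lam j" if "j \<in> T" for j
    proof -
      have "0 < lam j" "b' j \<le> lam j - 1"
        using b' T that by auto
      then show ?thesis
        by linarith
    qed
    ultimately show "(\<lambda>(b', T) j. if j \<in> T then Suc (b' j) else 0) p \<in> ?B"
      by (simp add: p)
  qed
qed

lemma card_rearrangements_below_remove_row:
  assumes lam: "zero_outside k lam" and mu: "zero_outside k mu"
  shows "card {b \<in> rearrangements k mu. \<forall>j. b j \<le> lam j} =
    ((conj_part lam 1 - conj_part mu 2) choose (conj_part mu 1 - conj_part mu 2)) *
    card {b \<in> rearrangements k (\<lambda>j. mu j - 1). \<forall>j. b j \<le> lam j - 1}"
proof -
  define B' where "B' = {b \<in> rearrangements k (\<lambda>j. mu j - 1). \<forall>j. b j \<le> lam j - 1}"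
  define L where "L = {j. lam j \<noteq> 0}"
  define rows where "rows b' = {T. {j. b' j \<noteq> 0} \<subseteq> T \<and> T \<subseteq> L \<and> card T = conj_part mu 1}"
    for b' :: "nat \<Rightarrow> nat"
  have "L \<subseteq> {1..k}"
    using lam by (auto simp: L_def zero_outside_def)
  then have L: "finite L" "card L = conj_part lam 1"
    using finite_subset conj_part_one[OF lam] by (auto simp: L_def)
  have "card {b \<in> rearrangements k mu. \<forall>j. b j \<le> lam j} = card (Sigma B' rows)"
    unfolding B'_def rows_def L_def using bij_betw_remove_bottom_row[OF lam] by (rule bij_betw_same_card)
  also have "\<dots> = (\<Sum>b'\<in>B'. card (rows b'))"
  proof (rule card_SigmaI)
    have "zero_outside k (\<lambda>j. lam j - 1)"
      using lam by (simp add: zero_outside_def)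
    then show "finite B'"
      by (rule finite_subset[rotated, OF finite_pointwise_le]) (auto simp: B'_def)
    show "\<forall>b'\<in>B'. finite (rows b')"
      using L(1) by (auto simp: rows_def intro: finite_subset[of _ "Pow L"])
  qed
  also have "\<dots> = (\<Sum>b'\<in>B'. (conj_part lam 1 - conj_part mu 2) choose (conj_part mu 1 - conj_part mu 2))"
  proof (rule sum.cong[OF refl])
    fix b' assume b': "b' \<in> B'"
    have supp: "card {j. b' j \<noteq> 0} = conj_part mu 2"
      using b' conj_part_one[of k b'] conj_part_diff_one[of 1 mu]
      by (simp add: B'_def rearrangements_def numeral_2_eq_2)
    have "{j. b' j \<noteq> 0} \<subseteq> L"
    proof
      fix j assume "j \<in> {j. b' j \<noteq> 0}"
      moreover have "b' j \<le> lam j - 1"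
        using b' by (simp add: B'_def)
      ultimately show "j \<in> L"
        by (auto simp: L_def)
    qed
    moreover have "conj_part mu 2 \<le> conj_part mu 1"
      using conj_part_Suc_le[OF mu, of 1] by (simp add: numeral_2_eq_2)
    ultimately show "card (rows b') = (conj_part lam 1 - conj_part mu 2) choose (conj_part mu 1 - conj_part mu 2)"
      unfolding rows_def using card_supersets[OF L(1)] supp L(2) by simp
  qed
  finally show ?thesis
    by (simp add: B'_def)
qed

lemma card_rearrangements_below:
  assumes "zero_outside k lam" and "zero_outside k mu" and "\<forall>j. lam j \<le> N" and "\<forall>j. mu j \<le> N"
  shows "card {b \<in> rearrangements k mu. \<forall>j. b j \<le> lam j} =
    (\<Prod>i\<in>{1..N}. (conj_part lam i - conj_part mu (Suc i)) choose (conj_part mu i - conj_part mu (Suc i)))"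
  using assms
proof (induction N arbitrary: lam mu)
  case 0
  then have "lam = (\<lambda>_. 0)" and "mu = (\<lambda>_. 0)"
    by auto
  then have "{b \<in> rearrangements k mu. \<forall>j. b j \<le> lam j} = {\<lambda>_. 0}"
    by (auto simp: rearrangements_def zero_outside_def)
  then show ?case
    by simp
next
  case (Suc N)
  define factor where "factor lam' mu' i = (conj_part lam' i - conj_part mu' (Suc i)) choose
      (conj_part mu' i - conj_part mu' (Suc i))" for lam' mu' :: "nat \<Rightarrow> nat" and i
  have "card {b \<in> rearrangements k (\<lambda>j. mu j - 1). \<forall>j. b j \<le> lam j - 1} =
      (\<Prod>i\<in>{1..N}. factor (\<lambda>j. lam j - 1) (\<lambda>j. mu j - 1) i)"
    unfolding factor_def using Suc.prems by (intro Suc.IH) (auto simp: zero_outside_def le_diff_conv)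
  also have "\<dots> = (\<Prod>i\<in>{1..N}. factor lam mu (Suc i))"
  proof (rule prod.cong[OF refl])
    fix i assume "i \<in> {1..N}"
    then show "factor (\<lambda>j. lam j - 1) (\<lambda>j. mu j - 1) i = factor lam mu (Suc i)"
      using conj_part_diff_one[of i lam] conj_part_diff_one[of i mu] conj_part_diff_one[of "Suc i" mu]
      by (simp add: factor_def)
  qed
  finally have "card {b \<in> rearrangements k mu. \<forall>j. b j \<le> lam j} =
      factor lam mu 1 * (\<Prod>i\<in>{1..N}. factor lam mu (Suc i))"
    using card_rearrangements_below_remove_row[OF Suc.prems(1,2)] by (simp add: factor_def numeral_2_eq_2)
  also have "\<dots> = factor lam mu 1 * (\<Prod>i\<in>{Suc 1..Suc N}. factor lam mu i)"
    by (simp only: prod.shift_bounds_cl_Suc_ivl)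
  also have "\<dots> = (\<Prod>i\<in>{1..Suc N}. factor lam mu i)"
    by (rule prod.atLeast_Suc_atMost[symmetric]) simp
  finally show ?case
    by (simp add: factor_def)
qed

lemma Pk_plus_le_iff_le_conj_part:
  assumes x: "Pk_plus k x" and i: "1 \<le> i" and j: "1 \<le> j"
  shows "i \<le> x j \<longleftrightarrow> j \<le> conj_part x i"
proof
  assume "i \<le> x j"
  then have "{1..j} \<subseteq> {l. 1 \<le> l \<and> i \<le> x l}"
    using x by (auto simp: Pk_plus_def intro: order_trans)
  then have "card {1..j} \<le> conj_part x i"
    unfolding conj_part_def using finite_conj_part_set[OF Pk_plus_zero_outside[OF x] i] by (rule card_mono[rotated])
  then show "j \<le> conj_part x i"
    by simp
next
  assume "j \<le> conj_part x i"
  show "i \<le> x j"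
  proof (rule ccontr)
    assume "\<not> i \<le> x j"
    then have "{l. 1 \<le> l \<and> i \<le> x l} \<subseteq> {1..<j}"
      using x j by (auto simp: Pk_plus_def) (meson le_trans linorder_not_le)
    then have "conj_part x i \<le> j - 1"
      unfolding conj_part_def using card_mono[of "{1..<j}"] by fastforce
    then show False
      using \<open>j \<le> conj_part x i\<close> j by linarith
  qed
qed

lemma Pk_plus_le_if_conj_part_le:
  assumes lam: "Pk_plus k lam" and mu: "Pk_plus k mu"
    and le: "\<forall>i\<ge>1. conj_part mu i \<le> conj_part lam i"
  shows "mu j \<le> lam j"
proof (cases "mu j = 0")
  case False
  then have "1 \<le> j"
    using zero_outside_0[OF Pk_plus_zero_outside[OF mu]] by (cases j) auto
  then have "j \<le> conj_part mu (mu j)"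
    using False Pk_plus_le_iff_le_conj_part[OF mu, of "mu j" j] by simp
  then have "j \<le> conj_part lam (mu j)"
    using le False by (meson le_trans less_one not_le)
  then show ?thesis
    using False \<open>1 \<le> j\<close> Pk_plus_le_iff_le_conj_part[OF lam, of "mu j" j] by simp
qed simp

lemma chi_eq_card_rearrangements_below:
  assumes lam: "Pk_plus k lam" and mu: "Pk_plus k mu"
  shows "chi lam mu = card {b \<in> rearrangements k mu. \<forall>j. b j \<le> lam j}"
proof (cases "\<forall>j. mu j \<le> lam j")
  case True
  have "lam j \<le> lam 1" for j
    using lam by (cases "j = 0") (auto simp: Pk_plus_def)
  then have "\<forall>j. lam j \<le> lam 1" and "\<forall>j. mu j \<le> lam 1"
    using True le_trans by blast+
  then show ?thesis
    using True card_rearrangements_below[OF Pk_plus_zero_outside[OF lam] Pk_plus_zero_outside[OF mu]]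
    by (simp add: chi_def)
next
  case False
  have empty: "{b \<in> rearrangements k mu. \<forall>j. b j \<le> lam j} = {}"
  proof (intro equals0I)
    fix b assume b: "b \<in> {b \<in> rearrangements k mu. \<forall>j. b j \<le> lam j}"
    have "conj_part mu i \<le> conj_part lam i" if "1 \<le> i" for i
      using conj_part_mono[OF Pk_plus_zero_outside[OF lam] that, of b] b that
      by (simp add: rearrangements_def)
    then show False
      using False Pk_plus_le_if_conj_part_le[OF lam mu] by blast
  qed
  have "chi lam mu = 0"
    using False by (auto simp: chi_def)
  then show ?thesis
    by (simp only: empty card.empty)
qed

lemma chi_eq_card_minreps:
  assumes lam: "Pk_plus k lam" and mu: "Pk_plus k mu"
  shows "chi lam mu = card {w \<in> minreps k mu. \<forall>i\<in>{1..k}. mu (w i) \<le> lam i}"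
proof -
  have "{w \<in> minreps k mu. \<forall>i\<in>{1..k}. mu (w i) \<le> lam i} = {w \<in> minreps k mu. \<forall>j. (mu \<circ> w) j \<le> lam j}"
    using Pk_plus_zero_outside[OF mu] by (auto simp: minreps_def zero_outside_def Sk_fixes)
  also have "card \<dots> = card {b \<in> rearrangements k mu. \<forall>j. b j \<le> lam j}"
    using bij_betw_minreps_rearrangements[OF mu] by (rule card_Collect_bij_betw)
  finally show ?thesis
    using chi_eq_card_rearrangements_below[OF lam mu] by simp
qed

theorem mainTheorem7:
  fixes k :: nat and lam mu nu :: "nat \<Rightarrow> nat"
  assumes "Pk_plus k lam" and "Pk_plus k mu" and "Pk_plus k nu"
  shows "(fcoeff lam mu nu =
           int (card {(w, w'). w \<in> minreps k lam \<and> w' \<in> minreps k mu \<and>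
                      (\<forall>i\<in>{1..k}. lam (w i) + mu (w' i) = nu i)})) \<and>
         chi lam mu = card {w \<in> minreps k mu. \<forall>i\<in>{1..k}. mu (w i) \<le> lam i}"
  using fcoeff_eq_card_minreps[OF assms(1,2) Pk_plus_zero_outside[OF assms(3)]]
    chi_eq_card_minreps[OF assms(1,2)] by simp

end
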